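(* Let $\mu\in\mathcal{M}'$. Then there exists an $S$-valued process $(\mathbf{t}_n)_{n\ge1}$, possibly defined on an enlargement of the probability space carrying $(\mathbf{s}_n)_{n\ge1}$, such that: (P1) the law of the sequence $(\mathbf{t}_n)_n$ equals the law of the sequence $(\mathbf{s}_n)_n$; (P2) for each $n$, the law of the pair $(\mathbf{s}_n,\mathbf{t}_n)$ is $\mu$; (P3) for each $n$, the conditional law of $\mathbf{s}_n$ given $(\mathbf{t}_1,\dots,\mathbf{t}_n)$ is $\mu(\cdot\mid\mathbf{t}_n)$; (P4) for each $n$, conditional on $\mathbf{s}_n$, the vector $(\mathbf{t}_1,\dots,\mathbf{t}_n)$ is independent of $(\mathbf{s}_{n+1},\mathbf{s}_{n+2},\dots)$.
   Context: $S$ is a finite set and $T$ a copy of $S$. $(\mathbf{s}_n)_{n\ge1}$ is an irreducible aperiodic Markov chain on $S$ with transition function $p(\cdot\mid\cdot)$, invariant measure $m$ (full support), and $\mathbf{s}_1\sim m$. $\mathcal{M}$ is the set of probability distributions $\mu$ on $S\times T$ both of whose marginals equal $m$; $\mu(s\mid t)=\mu(s,t)/m(t)$. $\mathcal{M}'$ is the set of $\mu\in\mathcal{M}$ such that for every $(s,t)\in S\times T$, $\sum_{s'\in S}\mu(s'\mid t)p(s\mid s')=\sum_{t'\in T}\mu(s\mid t')p(t'\mid t)$. *)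

theory Defs
  imports "HOL-Probability.Probability"
begin

text \<open>Convention: Ptr x y is the transition probability p(y | x) from state x to state y.
  Time is indexed from 0: index i in Isabelle corresponds to time i+1 in the paper.\<close>

definition stochastic :: "('s::finite \<Rightarrow> 's \<Rightarrow> real) \<Rightarrow> bool" where
  "stochastic Ptr \<longleftrightarrow> (\<forall>x y. 0 \<le> Ptr x y) \<and> (\<forall>x. (\<Sum>y\<in>UNIV. Ptr x y) = 1)"

fun nstep :: "('s::finite \<Rightarrow> 's \<Rightarrow> real) \<Rightarrow> nat \<Rightarrow> 's \<Rightarrow> 's \<Rightarrow> real" where
  "nstep Ptr 0 x y = (if x = y then 1 else 0)"
| "nstep Ptr (Suc n) x y = (\<Sum>z\<in>UNIV. nstep Ptr n x z * Ptr z y)"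

definition irreducible_chain :: "('s::finite \<Rightarrow> 's \<Rightarrow> real) \<Rightarrow> bool" where
  "irreducible_chain Ptr \<longleftrightarrow> (\<forall>x y. \<exists>n. nstep Ptr n x y > 0)"

definition aperiodic_chain :: "('s::finite \<Rightarrow> 's \<Rightarrow> real) \<Rightarrow> bool" where
  "aperiodic_chain Ptr \<longleftrightarrow> (\<forall>x. Gcd {n. n > 0 \<and> nstep Ptr n x x > 0} = 1)"

definition invariant_distr :: "('s::finite \<Rightarrow> 's \<Rightarrow> real) \<Rightarrow> ('s \<Rightarrow> real) \<Rightarrow> bool" where
  "invariant_distr Ptr m \<longleftrightarrow> (\<forall>x. 0 \<le> m x) \<and> (\<Sum>x\<in>UNIV. m x) = 1
     \<and> (\<forall>y. (\<Sum>x\<in>UNIV. m x * Ptr x y) = m y)"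

definition markov_chain_law ::
  "'w measure \<Rightarrow> (nat \<Rightarrow> 'w \<Rightarrow> 's::finite) \<Rightarrow> ('s \<Rightarrow> 's \<Rightarrow> real) \<Rightarrow> ('s \<Rightarrow> real) \<Rightarrow> bool" where
  "markov_chain_law M s Ptr m \<longleftrightarrow>
     (\<forall>n (a::nat \<Rightarrow> 's). measure M {\<omega>\<in>space M. \<forall>i\<le>n. s i \<omega> = a i}
        = m (a 0) * (\<Prod>i<n. Ptr (a i) (a (Suc i))))"

definition couplings :: "('s::finite \<Rightarrow> real) \<Rightarrow> ('s \<Rightarrow> 's \<Rightarrow> real) set" where
  "couplings m = {mu. (\<forall>a b. 0 \<le> mu a b) \<and> (\<Sum>a\<in>UNIV. \<Sum>b\<in>UNIV. mu a b) = 1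
      \<and> (\<forall>a. (\<Sum>b\<in>UNIV. mu a b) = m a) \<and> (\<forall>b. (\<Sum>a\<in>UNIV. mu a b) = m b)}"

definition cond_mu :: "('s \<Rightarrow> 's \<Rightarrow> real) \<Rightarrow> ('s \<Rightarrow> real) \<Rightarrow> 's \<Rightarrow> 's \<Rightarrow> real" where
  "cond_mu mu m a b = mu a b / m b"

definition couplings' :: "('s::finite \<Rightarrow> 's \<Rightarrow> real) \<Rightarrow> ('s \<Rightarrow> real) \<Rightarrow> ('s \<Rightarrow> 's \<Rightarrow> real) set" where
  "couplings' Ptr m = {mu \<in> couplings m. \<forall>a b.
      (\<Sum>a'\<in>UNIV. cond_mu mu m a' b * Ptr a' a) = (\<Sum>b'\<in>UNIV. cond_mu mu m a b' * Ptr b b')}"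

definition cond_law_prop ::
  "'w measure \<Rightarrow> (nat \<Rightarrow> 'w \<Rightarrow> 's::finite) \<Rightarrow> (nat \<Rightarrow> 'w \<Rightarrow> 's) \<Rightarrow> ('s \<Rightarrow> 's \<Rightarrow> real) \<Rightarrow> ('s \<Rightarrow> real) \<Rightarrow> bool" where
  "cond_law_prop M S T mu m \<longleftrightarrow>
     (\<forall>n a (b::nat \<Rightarrow> 's).
        measure M {\<omega>\<in>space M. S n \<omega> = a \<and> (\<forall>i\<le>n. T i \<omega> = b i)}
        = cond_mu mu m a (b n) * measure M {\<omega>\<in>space M. \<forall>i\<le>n. T i \<omega> = b i})"

text \<open>(P4): given S n, (T 0,...,T n) is independent of (S (n+1), S (n+2), ...),
  expressed on cylinder events (which generate the future sigma-algebra).\<close>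
definition cond_indep_prop ::
  "'w measure \<Rightarrow> (nat \<Rightarrow> 'w \<Rightarrow> 's::finite) \<Rightarrow> (nat \<Rightarrow> 'w \<Rightarrow> 's) \<Rightarrow> bool" where
  "cond_indep_prop M S T \<longleftrightarrow>
     (\<forall>n k a (b::nat \<Rightarrow> 's) (c::nat \<Rightarrow> 's).
        measure M {\<omega>\<in>space M. S n \<omega> = a \<and> (\<forall>i\<le>n. T i \<omega> = b i) \<and> (\<forall>j<k. S (Suc n + j) \<omega> = c j)}
          * measure M {\<omega>\<in>space M. S n \<omega> = a}
        = measure M {\<omega>\<in>space M. S n \<omega> = a \<and> (\<forall>i\<le>n. T i \<omega> = b i)}
          * measure M {\<omega>\<in>space M. S n \<omega> = a \<and> (\<forall>j<k. S (Suc n + j) \<omega> = c j)})"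

end

theory Submission
  imports Defs
begin

text \<open>The process \<open>t\<close> is built from the chain \<open>s\<close> and independent auxiliary randomness:
  \<open>t\<^sub>1\<close> is drawn from \<open>\<mu>(s\<^sub>1, \<cdot>) / m(s\<^sub>1)\<close>, and given \<open>t\<^sub>n = b\<close>, \<open>s\<^sub>n\<^sub>+\<^sub>1 = a\<close> the next value
  \<open>t\<^sub>n\<^sub>+\<^sub>1 = b'\<close> is drawn with probability proportional to \<open>p(b' | b) \<mu>(a | b')\<close>.
  The defining identity of \<open>\<M>'\<close> says that the normaliser \<open>\<Sum>\<^sub>b\<^sub>' \<mu>(a | b') p(b' | b)\<close> equals
  \<open>\<Sum>\<^sub>a\<^sub>' \<mu>(a' | b) p(a | a')\<close>, and this is exactly what makes an induction on \<open>n\<close> go through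
  for the joint law
  \<open>P(s\<^sub>n = a, t\<^sub>1..t\<^sub>n = b, s\<^sub>n\<^sub>+\<^sub>1..s\<^sub>n\<^sub>+\<^sub>k = c) = m(b\<^sub>1) \<Prod> p(b\<^sub>i\<^sub>+\<^sub>1 | b\<^sub>i) \<mu>(a | b\<^sub>n) \<Prod> p(c\<^sub>j\<^sub>+\<^sub>1 | c\<^sub>j)\<close>.
  All four properties follow from this formula by summation.\<close>

lemma pmf_embed_pmf_finite:
  fixes f :: "'a::finite \<Rightarrow> real"
  assumes "\<And>x. 0 \<le> f x" "(\<Sum>x\<in>UNIV. f x) = 1"
  shows "pmf (embed_pmf f) x = f x"
proof (rule pmf_embed_pmf)
  have "(\<integral>\<^sup>+x. ennreal (f x) \<partial>count_space UNIV) = ennreal (\<Sum>x\<in>UNIV. f x)"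
    using assms(1) by (simp add: nn_integral_count_space_finite sum_ennreal)
  then show "(\<integral>\<^sup>+x. ennreal (f x) \<partial>count_space UNIV) = 1"
    using assms(2) by simp
qed (fact assms(1))

lemma (in finite_measure) measure_eq_sum_fibres:
  fixes f :: "'a \<Rightarrow> 'b::finite"
  assumes f: "f \<in> M \<rightarrow>\<^sub>M count_space UNIV" and A: "A \<in> sets M"
  shows "measure M A = (\<Sum>y\<in>UNIV. measure M {z\<in>A. f z = y})"
proof -
  have fibre: "{z\<in>A. f z = y} = A \<inter> (f -` {y} \<inter> space M)" for y
    using sets.sets_into_space[OF A] by auto
  have "measure M (\<Union>y. {z\<in>A. f z = y}) = (\<Sum>y\<in>UNIV. measure M {z\<in>A. f z = y})"
    using A f unfolding fibre
    by (intro finite_measure_finite_Union) (auto simp: disjoint_family_on_def)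
  moreover have "(\<Union>y. {z\<in>A. f z = y}) = A" by auto
  ultimately show ?thesis by simp
qed

lemma (in finite_measure) measure_cylinder_eq_sum_paths:
  fixes X :: "nat \<Rightarrow> 'a \<Rightarrow> 'b::finite"
  assumes [measurable]: "\<And>i. X i \<in> M \<rightarrow>\<^sub>M count_space UNIV" and J: "J \<subseteq> {..n}"
  shows "measure M {z\<in>space M. \<forall>i\<in>J. X i z \<in> A i}
     = (\<Sum>b\<in>{b\<in>PiE {..n} (\<lambda>_. UNIV). \<forall>i\<in>J. b i \<in> A i}.
          measure M {z\<in>space M. \<forall>i\<le>n. X i z = b i})"
proof -
  define B where "B = {b\<in>PiE {..n} (\<lambda>_. UNIV::'b set). \<forall>i\<in>J. b i \<in> A i}"
  have "finite B"
    unfolding B_def by (rule finite_subset[of _ "PiE {..n} (\<lambda>_. UNIV)"]) (auto intro: finite_PiE)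
  have eq: "{z\<in>space M. \<forall>i\<in>J. X i z \<in> A i} = (\<Union>b\<in>B. {z\<in>space M. \<forall>i\<le>n. X i z = b i})"
  proof (intro set_eqI iffI)
    fix z assume z: "z \<in> {z\<in>space M. \<forall>i\<in>J. X i z \<in> A i}"
    then have "restrict (\<lambda>i. X i z) {..n} \<in> B" using J unfolding B_def by auto
    then show "z \<in> (\<Union>b\<in>B. {z\<in>space M. \<forall>i\<le>n. X i z = b i})"
      by (rule UN_I) (use z in auto)
  qed (use J in \<open>auto simp: B_def\<close>)
  have "disjoint_family_on (\<lambda>b. {z\<in>space M. \<forall>i\<le>n. X i z = b i}) B"
  proof (unfold disjoint_family_on_def, intro ballI impI)
    fix b b' assume "b \<in> B" "b' \<in> B" "b \<noteq> b'"
    then obtain i where "i \<le> n" "b i \<noteq> b' i"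
      unfolding B_def by (metis (mono_tags, lifting) PiE_ext atMost_iff mem_Collect_eq)
    then show "{z\<in>space M. \<forall>i\<le>n. X i z = b i} \<inter> {z\<in>space M. \<forall>i\<le>n. X i z = b' i} = {}"
      by auto
  qed
  with \<open>finite B\<close> show ?thesis
    unfolding eq B_def[symmetric] by (intro finite_measure_finite_Union) auto
qed

lemma distr_process_eqI_paths:
  fixes X :: "nat \<Rightarrow> 'a \<Rightarrow> 'b::finite" and Y :: "nat \<Rightarrow> 'c \<Rightarrow> 'b"
  assumes "finite_measure M" "finite_measure M'"
    and [measurable]: "\<And>i. X i \<in> M \<rightarrow>\<^sub>M count_space UNIV" "\<And>i. Y i \<in> M' \<rightarrow>\<^sub>M count_space UNIV"
    and paths: "\<And>n b. measure M {z\<in>space M. \<forall>i\<le>n. X i z = b i}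
                    = measure M' {z\<in>space M'. \<forall>i\<le>n. Y i z = b i}"
  shows "distr M (PiM UNIV (\<lambda>_. count_space UNIV)) (\<lambda>z n. X n z)
       = distr M' (PiM UNIV (\<lambda>_. count_space UNIV)) (\<lambda>z n. Y n z)"
proof (rule measure_eqI_PiM_infinite)
  interpret X: finite_measure M by fact
  interpret Y: finite_measure M' by fact
  have mX: "(\<lambda>z n. X n z) \<in> M \<rightarrow>\<^sub>M PiM UNIV (\<lambda>_. count_space UNIV)"
    by (rule measurable_PiM_single') (auto simp: space_PiM)
  have mY: "(\<lambda>z n. Y n z) \<in> M' \<rightarrow>\<^sub>M PiM UNIV (\<lambda>_. count_space UNIV)"
    by (rule measurable_PiM_single') (auto simp: space_PiM)
  show "finite_measure (distr M (PiM UNIV (\<lambda>_. count_space UNIV)) (\<lambda>z n. X n z))"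
    using mX by (rule X.finite_measure_distr)
  fix A :: "nat \<Rightarrow> 'b set" and J :: "nat set"
  assume "finite J"
  define C where "C = prod_emb UNIV (\<lambda>_. count_space UNIV) J (Pi\<^sub>E J A)"
  have C: "C \<in> sets (PiM UNIV (\<lambda>_. count_space UNIV))"
    unfolding C_def using \<open>finite J\<close> by (intro sets_PiM_I) auto
  have preimage: "f -` C \<inter> space N = {z\<in>space N. \<forall>i\<in>J. f z i \<in> A i}"
    for N and f :: "_ \<Rightarrow> nat \<Rightarrow> 'b"
    by (auto simp: C_def prod_emb_iff PiE_iff)
  define n where "n = Max (insert 0 J)"
  have Jn: "J \<subseteq> {..n}" using \<open>finite J\<close> by (auto simp: n_def)
  have "measure M {z\<in>space M. \<forall>i\<in>J. X i z \<in> A i} = measure M' {z\<in>space M'. \<forall>i\<in>J. Y i z \<in> A i}"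
    by (simp only: X.measure_cylinder_eq_sum_paths[OF _ Jn] Y.measure_cylinder_eq_sum_paths[OF _ Jn]
        paths measurable)
  then have "emeasure M {z\<in>space M. \<forall>i\<in>J. X i z \<in> A i} = emeasure M' {z\<in>space M'. \<forall>i\<in>J. Y i z \<in> A i}"
    by (simp add: X.emeasure_eq_measure Y.emeasure_eq_measure)
  then show "emeasure (distr M (PiM UNIV (\<lambda>_. count_space UNIV)) (\<lambda>z n. X n z)) C
           = emeasure (distr M' (PiM UNIV (\<lambda>_. count_space UNIV)) (\<lambda>z n. Y n z)) C"
    unfolding emeasure_distr[OF mX C] emeasure_distr[OF mY C] preimage .
qed simp_all

text \<open>Step \<open>n\<close> uses the auxiliary variable with label \<open>(n, t\<^sub>n\<^sub>-\<^sub>1, s\<^sub>n)\<close>, stored at coordinate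
  \<open>to_nat (n, t\<^sub>n\<^sub>-\<^sub>1, s\<^sub>n)\<close> of the auxiliary sequence; at step 0 the middle entry is a dummy.\<close>
primrec coupled_chain :: "(nat \<Rightarrow> 'w \<Rightarrow> 's::finite) \<Rightarrow> nat \<Rightarrow> 'w \<times> (nat \<Rightarrow> 's) \<Rightarrow> 's" where
  "coupled_chain s 0 z = snd z (to_nat (0::nat, s 0 (fst z), s 0 (fst z)))"
| "coupled_chain s (Suc n) z = snd z (to_nat (Suc n, coupled_chain s n z, s (Suc n) (fst z)))"

locale coupling_construction = prob_space M0
  for M0 :: "'w measure" +
  fixes Ptr :: "'s::finite \<Rightarrow> 's \<Rightarrow> real" and m :: "'s \<Rightarrow> real"
    and mu :: "'s \<Rightarrow> 's \<Rightarrow> real" and s :: "nat \<Rightarrow> 'w \<Rightarrow> 's"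
  assumes stochastic: "stochastic Ptr" and invariant: "invariant_distr Ptr m"
    and m_pos: "\<And>x. 0 < m x"
    and s_measurable [measurable]: "\<And>n. s n \<in> M0 \<rightarrow>\<^sub>M count_space UNIV"
    and markov: "markov_chain_law M0 s Ptr m"
    and mu: "mu \<in> couplings' Ptr m"
begin

abbreviation cmu :: "'s \<Rightarrow> 's \<Rightarrow> real" where "cmu \<equiv> cond_mu mu m"

lemma Ptr_nonneg: "0 \<le> Ptr x y"
  using stochastic by (simp add: stochastic_def)

lemma m_invariant: "(\<Sum>x\<in>UNIV. m x * Ptr x y) = m y"
  using invariant by (simp add: invariant_distr_def)

lemma mu_nonneg: "0 \<le> mu a b" and mu_row_sum: "(\<Sum>b\<in>UNIV. mu a b) = m a"
  and mu_col_sum: "(\<Sum>a\<in>UNIV. mu a b) = m b"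
  using mu by (simp_all add: couplings'_def couplings_def)

lemma cmu_nonneg: "0 \<le> cmu a b"
  using mu_nonneg m_pos[of b] by (simp add: cond_mu_def)

lemma m_times_cmu: "m b * cmu a b = mu a b"
  using m_pos[of b] by (simp add: cond_mu_def)

lemma cmu_sum: "(\<Sum>a\<in>UNIV. cmu a b) = 1"
  using m_pos[of b] mu_col_sum[of b] by (simp add: cond_mu_def sum_divide_distrib[symmetric])

definition step_norm :: "'s \<Rightarrow> 's \<Rightarrow> real" where
  "step_norm b a = (\<Sum>b'\<in>UNIV. cmu a b' * Ptr b b')"

lemma step_norm_eq: "step_norm b a = (\<Sum>a'\<in>UNIV. cmu a' b * Ptr a' a)"
  using mu by (simp add: couplings'_def step_norm_def)

lemma step_norm_nonneg: "0 \<le> step_norm b a"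
  unfolding step_norm_def by (intro sum_nonneg mult_nonneg_nonneg cmu_nonneg Ptr_nonneg)

definition init_kernel :: "'s \<Rightarrow> 's pmf" where
  "init_kernel a = embed_pmf (\<lambda>b. mu a b / m a)"

text \<open>If the normaliser vanishes the transition cannot occur, and the fallback is irrelevant.\<close>
definition step_kernel :: "'s \<Rightarrow> 's \<Rightarrow> 's pmf" where
  "step_kernel b a = (if step_norm b a > 0
     then embed_pmf (\<lambda>b'. Ptr b b' * cmu a b' / step_norm b a) else return_pmf b)"

definition noise_kernel :: "nat \<times> 's \<times> 's \<Rightarrow> 's pmf" where
  "noise_kernel t = (case t of (0, a, _) \<Rightarrow> init_kernel a | (Suc _, b, a) \<Rightarrow> step_kernel b a)"

lemma pmf_init_kernel: "pmf (init_kernel a) b = mu a b / m a"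
  unfolding init_kernel_def using mu_nonneg m_pos[of a] mu_row_sum[of a]
  by (intro pmf_embed_pmf_finite) (auto simp: sum_divide_distrib[symmetric])

lemma step_norm_times_pmf_step_kernel: "step_norm b a * pmf (step_kernel b a) b' = Ptr b b' * cmu a b'"
proof (cases "step_norm b a > 0")
  case True
  then have "pmf (step_kernel b a) b' = Ptr b b' * cmu a b' / step_norm b a"
    unfolding step_kernel_def using Ptr_nonneg cmu_nonneg
    by (simp, intro pmf_embed_pmf_finite)
       (auto simp: sum_divide_distrib[symmetric] step_norm_def mult.commute)
  with True show ?thesis by simp
next
  case False
  then have "step_norm b a = 0" using step_norm_nonneg[of b a] by simp
  then have "cmu a b' * Ptr b b' = 0"
    unfolding step_norm_def by (subst (asm) sum_nonneg_eq_0_iff) (auto simp: Ptr_nonneg cmu_nonneg)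
  with \<open>step_norm b a = 0\<close> show ?thesis by (simp add: mult.commute)
qed

definition noise :: "(nat \<Rightarrow> 's) measure" where
  "noise = PiM UNIV (\<lambda>j. measure_pmf (noise_kernel (from_nat j)))"

definition coupled_space :: "('w \<times> (nat \<Rightarrow> 's)) measure" where
  "coupled_space = M0 \<Otimes>\<^sub>M noise"

sublocale N: product_prob_space "\<lambda>j. measure_pmf (noise_kernel (from_nat j))" UNIV
  by unfold_locales

sublocale noise: prob_space noise
  unfolding noise_def by (rule prob_space_PiM) (rule prob_space_measure_pmf)

sublocale C: prob_space coupled_space
  unfolding coupled_space_def by (intro prob_space_pair prob_space_axioms noise.prob_space_axioms)

abbreviation S :: "nat \<Rightarrow> 'w \<times> (nat \<Rightarrow> 's) \<Rightarrow> 's" where "S n z \<equiv> s n (fst z)"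
abbreviation T :: "nat \<Rightarrow> 'w \<times> (nat \<Rightarrow> 's) \<Rightarrow> 's" where "T \<equiv> coupled_chain s"
abbreviation U :: "nat \<times> 's \<times> 's \<Rightarrow> 'w \<times> (nat \<Rightarrow> 's) \<Rightarrow> 's" where "U t z \<equiv> snd z (to_nat t)"

lemma space_noise: "space noise = UNIV"
  unfolding noise_def by (simp add: space_PiM)

lemma space_coupled_space: "space coupled_space = space M0 \<times> UNIV"
  unfolding coupled_space_def by (simp add: space_pair_measure space_noise)

lemma measurable_noise_coordinate [measurable]: "(\<lambda>\<tau>. \<tau> j) \<in> noise \<rightarrow>\<^sub>M count_space UNIV"
proof -
  have "(\<lambda>\<tau>. \<tau> j) \<in> noise \<rightarrow>\<^sub>M measure_pmf (noise_kernel (from_nat j))"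
    unfolding noise_def by (rule measurable_component_singleton) simp
  then show ?thesis by (simp cong: measurable_cong_sets)
qed

lemma measurable_S [measurable]: "S n \<in> coupled_space \<rightarrow>\<^sub>M count_space UNIV"
  and measurable_U [measurable]: "U t \<in> coupled_space \<rightarrow>\<^sub>M count_space UNIV"
  unfolding coupled_space_def by measurable

lemma measurable_T [measurable]: "T n \<in> coupled_space \<rightarrow>\<^sub>M count_space UNIV"
proof (induction n)
  case 0
  show ?case
    by (simp only: coupled_chain.simps,
        rule measurable_compose_countable[where f="\<lambda>a. U (0, a, a)" and g="S 0"]) measurable
next
  case (Suc n)
  have "(\<lambda>z. U (Suc n, b, S (Suc n) z) z) \<in> coupled_space \<rightarrow>\<^sub>M count_space UNIV" for b
    by (rule measurable_compose_countable[where f="\<lambda>a. U (Suc n, b, a)" and g="S (Suc n)"])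
       measurable
  then have "(\<lambda>z. U (Suc n, T n z, S (Suc n) z) z) \<in> coupled_space \<rightarrow>\<^sub>M count_space UNIV"
    by (rule measurable_compose_countable[where f="\<lambda>b z. U (Suc n, b, S (Suc n) z) z"]) (rule Suc)
  then show ?case by simp
qed

lemma measure_noise_cylinder:
  assumes "finite J"
  shows "measure noise {\<tau>. \<forall>t\<in>J. \<tau> (to_nat t) = d t} = (\<Prod>t\<in>J. pmf (noise_kernel t) (d t))"
proof -
  have "{\<tau>. \<forall>t\<in>J. \<tau> (to_nat t) = d t}
      = {\<tau>\<in>space noise. \<forall>j\<in>to_nat ` J. \<tau> j \<in> {d (from_nat j)}}"
    by (auto simp: space_noise)
  then have "emeasure noise {\<tau>. \<forall>t\<in>J. \<tau> (to_nat t) = d t}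
      = (\<Prod>j\<in>to_nat ` J. emeasure (measure_pmf (noise_kernel (from_nat j))) {d (from_nat j)})"
    unfolding noise_def by (simp only:) (rule N.emeasure_PiM_Collect, use assms in auto)
  also have "\<dots> = ennreal (\<Prod>t\<in>J. pmf (noise_kernel t) (d t))"
    by (subst prod.reindex) (auto simp: inj_on_def emeasure_pmf_single prod_ennreal)
  finally show ?thesis by (simp add: noise.emeasure_eq_measure prod_nonneg)
qed

lemma measure_coupled_space_Times:
  assumes "A \<in> sets M0" "B \<in> sets noise"
  shows "measure coupled_space (A \<times> B) = measure M0 A * measure noise B"
proof -
  have "emeasure coupled_space (A \<times> B) = emeasure M0 A * emeasure noise B"
    unfolding coupled_space_def using assms by (rule noise.emeasure_pair_measure_Times)
  then show ?thesis
    by (simp add: C.emeasure_eq_measure emeasure_eq_measure noise.emeasure_eq_measure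
        ennreal_mult[symmetric])
qed

definition path_weight :: "nat \<Rightarrow> nat \<Rightarrow> 's \<Rightarrow> (nat \<Rightarrow> 's) \<Rightarrow> real" where
  "path_weight l n a b = m (b l) * (\<Prod>i\<in>{l..<n}. Ptr (b i) (b (Suc i))) * cmu a (b n)"

definition future_weight :: "'s \<Rightarrow> (nat \<Rightarrow> 's) \<Rightarrow> nat \<Rightarrow> real" where
  "future_weight a c k = (\<Prod>j<k. Ptr (case_nat a c j) (c j))"

definition noise_weight :: "(nat \<times> 's \<times> 's) set \<Rightarrow> (nat \<times> 's \<times> 's \<Rightarrow> 's) \<Rightarrow> real" where
  "noise_weight J d = (\<Prod>t\<in>J. pmf (noise_kernel t) (d t))"

lemma future_weight_Suc: "future_weight x (case_nat a c) (Suc k) = Ptr x a * future_weight a c k"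
  unfolding future_weight_def by (simp only: prod.lessThan_Suc_shift) simp

lemma noise_weight_insert_upd:
  assumes "finite J" "t \<notin> J"
  shows "noise_weight (insert t J) (d(t := v)) = pmf (noise_kernel t) v * noise_weight J d"
proof -
  have "(\<Prod>t'\<in>J. pmf (noise_kernel t') ((d(t := v)) t')) = noise_weight J d"
    unfolding noise_weight_def using assms by (intro prod.cong) auto
  with assms show ?thesis by (simp add: noise_weight_def)
qed

lemma sum_path_weight_times_Ptr:
  "(\<Sum>x\<in>UNIV. path_weight l n x b * Ptr x a)
     = m (b l) * (\<Prod>i\<in>{l..<n}. Ptr (b i) (b (Suc i))) * step_norm (b n) a"
  unfolding path_weight_def step_norm_eq by (simp add: sum_distrib_left mult.assoc)

text \<open>The auxiliary labels in \<open>J\<close> belong to later steps; carrying them lets the induction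
  fix the fresh auxiliary variable used at step \<open>n + 1\<close>.\<close>
definition window_event ::
  "nat \<Rightarrow> nat \<Rightarrow> 's \<Rightarrow> (nat \<Rightarrow> 's) \<Rightarrow> nat \<Rightarrow> (nat \<Rightarrow> 's) \<Rightarrow> (nat \<times> 's \<times> 's) set
     \<Rightarrow> (nat \<times> 's \<times> 's \<Rightarrow> 's) \<Rightarrow> ('w \<times> (nat \<Rightarrow> 's)) set" where
  "window_event n l a b k c J d = {z\<in>space coupled_space. S n z = a \<and> (\<forall>i\<in>{l..n}. T i z = b i)
     \<and> (\<forall>j<k. S (Suc n + j) z = c j) \<and> (\<forall>t\<in>J. U t z = d t)}"

lemma sets_window_event [measurable]: "finite J \<Longrightarrow> window_event n l a b k c J d \<in> sets coupled_space"
  unfolding window_event_def by measurable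

lemma measure_window_event_0:
  assumes "finite J" "\<forall>t\<in>J. 0 < fst t"
  shows "measure coupled_space (window_event 0 0 a b k c J d)
    = path_weight 0 0 a b * future_weight a c k * noise_weight J d"
proof -
  define A where "A = {\<omega>\<in>space M0. \<forall>i\<le>k. s i \<omega> = case_nat a c i}"
  define B where "B = {\<tau>. \<forall>t\<in>insert (0, a, a) J. \<tau> (to_nat t) = (d((0, a, a) := b 0)) t}"
  have "(0, a, a) \<notin> J" using assms by auto
  have A: "A \<in> sets M0" unfolding A_def by measurable
  have "B = {\<tau>\<in>space noise. \<forall>t\<in>insert (0, a, a) J. \<tau> (to_nat t) = (d((0, a, a) := b 0)) t}"
    by (simp add: B_def space_noise)
  also have "\<dots> \<in> sets noise" using assms(1) by measurable
  finally have B: "B \<in> sets noise" .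
  have all_le_Suc: "(\<forall>i\<le>k. P i) \<longleftrightarrow> P 0 \<and> (\<forall>j<k. P (Suc j))" for P
    by (metis All_less_Suc2 less_Suc_eq_le)
  have "window_event 0 0 a b k c J d = A \<times> B"
    using \<open>(0, a, a) \<notin> J\<close>
    by (auto simp: window_event_def space_coupled_space A_def B_def all_le_Suc split: if_splits)
  moreover have "measure M0 A = m a * future_weight a c k"
    using markov unfolding markov_chain_law_def A_def future_weight_def
    by (drule_tac x=k in spec, drule_tac x="case_nat a c" in spec) simp
  moreover have "measure noise B = mu a (b 0) / m a * noise_weight J d"
    unfolding B_def measure_noise_cylinder[OF finite.insertI[OF assms(1)]]
      noise_weight_def[symmetric] noise_weight_insert_upd[OF assms(1) \<open>(0, a, a) \<notin> J\<close>]
    by (simp add: noise_kernel_def pmf_init_kernel)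
  ultimately show ?thesis
    using m_pos[of a] m_times_cmu[of "b 0" a]
    by (simp add: measure_coupled_space_Times[OF A B] path_weight_def field_simps)
qed

lemma all_less_Suc_case_nat_iff:
  "(\<forall>j<Suc k. S (Suc n + j) z = case_nat a c j) \<longleftrightarrow> S (Suc n) z = a \<and> (\<forall>j<k. S (Suc (Suc n) + j) z = c j)"
  by (simp add: All_less_Suc2)

lemma window_event_Suc_fibre:
  assumes "l \<le> n" "(Suc n, b n, a) \<notin> J"
  shows "{z\<in>window_event (Suc n) l a b k c J d. S n z = x}
    = window_event n l x b (Suc k) (case_nat a c) (insert (Suc n, b n, a) J) (d((Suc n, b n, a) := b (Suc n)))"
  using assms unfolding window_event_def all_less_Suc_case_nat_iff
  by (auto simp: atLeastAtMostSuc_conv split: if_splits)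

lemma window_event_Suc_start_fibre:
  assumes "(Suc n, y, a) \<notin> J"
  shows "{z\<in>window_event (Suc n) (Suc n) a b k c J d. S n z = x \<and> T n z = y}
    = window_event n n x (b(n := y)) (Suc k) (case_nat a c) (insert (Suc n, y, a) J) (d((Suc n, y, a) := b (Suc n)))"
  using assms unfolding window_event_def all_less_Suc_case_nat_iff
  by (auto split: if_splits)

lemma measure_window_event_Suc_extend:
  assumes IH: "\<And>x k c J d. finite J \<Longrightarrow> \<forall>t\<in>J. n < fst t \<Longrightarrow>
      measure coupled_space (window_event n l x b k c J d) = path_weight l n x b * future_weight x c k * noise_weight J d"
    and "l \<le> n" "finite J" "\<forall>t\<in>J. Suc n < fst t"
  shows "measure coupled_space (window_event (Suc n) l a b k c J d)
    = path_weight l (Suc n) a b * future_weight a c k * noise_weight J d"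
proof -
  define t where "t = (Suc n, b n, a)"
  have "t \<notin> J" and J': "\<forall>t'\<in>insert t J. n < fst t'" using assms by (auto simp: t_def)
  have "measure coupled_space (window_event (Suc n) l a b k c J d)
      = (\<Sum>x\<in>UNIV. measure coupled_space {z\<in>window_event (Suc n) l a b k c J d. S n z = x})"
    using assms by (intro C.measure_eq_sum_fibres) measurable
  also have "\<dots> = (\<Sum>x\<in>UNIV. measure coupled_space
      (window_event n l x b (Suc k) (case_nat a c) (insert t J) (d(t := b (Suc n)))))"
    using assms \<open>t \<notin> J\<close> by (simp add: window_event_Suc_fibre t_def)
  also have "\<dots> = (\<Sum>x\<in>UNIV. path_weight l n x b * Ptr x a)
      * pmf (step_kernel (b n) a) (b (Suc n)) * future_weight a c k * noise_weight J d"
    using IH[OF _ J'] assms \<open>t \<notin> J\<close>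
    by (simp add: future_weight_Suc noise_weight_insert_upd sum_distrib_right)
       (simp add: t_def noise_kernel_def mult_ac)
  also have "\<dots> = path_weight l (Suc n) a b * future_weight a c k * noise_weight J d"
    unfolding sum_path_weight_times_Ptr
    using step_norm_times_pmf_step_kernel[of "b n" a "b (Suc n)"] \<open>l \<le> n\<close>
    by (simp add: path_weight_def prod.atLeastLessThan_Suc mult_ac)
  finally show ?thesis .
qed

lemma measure_window_event_Suc_start:
  assumes IH: "\<And>x b k c J d. finite J \<Longrightarrow> \<forall>t\<in>J. n < fst t \<Longrightarrow>
      measure coupled_space (window_event n n x b k c J d) = path_weight n n x b * future_weight x c k * noise_weight J d"
    and "finite J" "\<forall>t\<in>J. Suc n < fst t"
  shows "measure coupled_space (window_event (Suc n) (Suc n) a b k c J d)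
    = path_weight (Suc n) (Suc n) a b * future_weight a c k * noise_weight J d"
proof -
  let ?b' = "b (Suc n)"
  have "(Suc n, y, a) \<notin> J" and J': "\<forall>t'\<in>insert (Suc n, y, a) J. n < fst t'" for y
    using assms by auto
  have "measure coupled_space (window_event (Suc n) (Suc n) a b k c J d)
      = (\<Sum>x\<in>UNIV. \<Sum>y\<in>UNIV. measure coupled_space
          {z\<in>{z\<in>window_event (Suc n) (Suc n) a b k c J d. S n z = x}. T n z = y})"
    using assms
    by (subst C.measure_eq_sum_fibres[of "S n"], measurable)
       (intro sum.cong refl C.measure_eq_sum_fibres, measurable)
  also have "\<dots> = (\<Sum>x\<in>UNIV. \<Sum>y\<in>UNIV. measure coupled_space (window_event n n x (b(n := y)) (Suc k)
           (case_nat a c) (insert (Suc n, y, a) J) (d((Suc n, y, a) := ?b'))))"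
    using \<open>\<And>y. (Suc n, y, a) \<notin> J\<close> by (simp add: window_event_Suc_start_fibre)
  also have "\<dots> = (\<Sum>y\<in>UNIV. m y * (\<Sum>x\<in>UNIV. cmu x y * Ptr x a) * pmf (step_kernel y a) ?b')
      * future_weight a c k * noise_weight J d"
    using assms \<open>\<And>y. (Suc n, y, a) \<notin> J\<close> IH[OF _ J']
    by (subst sum.swap) (simp add: future_weight_Suc noise_weight_insert_upd path_weight_def
        noise_kernel_def sum_distrib_left sum_distrib_right mult_ac)
  also have "\<dots> = (\<Sum>y\<in>UNIV. m y * Ptr y ?b') * cmu a ?b' * future_weight a c k * noise_weight J d"
    using step_norm_times_pmf_step_kernel[of _ a ?b']
    by (simp add: step_norm_eq[symmetric] sum_distrib_right mult.assoc)
  also have "\<dots> = path_weight (Suc n) (Suc n) a b * future_weight a c k * noise_weight J d"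
    by (simp add: m_invariant path_weight_def)
  finally show ?thesis .
qed

text \<open>Only \<open>l = 0\<close> and \<open>l = n\<close> are needed later, but the step for \<open>l = n + 1\<close> uses \<open>l = n\<close>,
  so the induction runs over all \<open>l \<le> n\<close>.\<close>
lemma measure_window_event:
  assumes "l \<le> n" "finite J" "\<forall>t\<in>J. n < fst t"
  shows "measure coupled_space (window_event n l a b k c J d)
    = path_weight l n a b * future_weight a c k * noise_weight J d"
  using assms
proof (induction n arbitrary: l a b k c J d)
  case 0
  then show ?case by (simp add: measure_window_event_0)
next
  case (Suc n)
  show ?case
  proof (cases "l \<le> n")
    case True
    with Suc show ?thesis by (intro measure_window_event_Suc_extend[OF Suc.IH]) auto
  next
    case False
    with Suc.prems have "l = Suc n" by simp
    with Suc.prems show ?thesis by (simp add: measure_window_event_Suc_start[OF Suc.IH])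
  qed
qed

lemma measure_observed_window:
  assumes "l \<le> n"
  shows "measure coupled_space {z\<in>space coupled_space. S n z = a \<and> (\<forall>i\<in>{l..n}. T i z = b i)
      \<and> (\<forall>j<k. S (Suc n + j) z = c j)} = path_weight l n a b * future_weight a c k"
  using measure_window_event[OF assms, of "{}" a b k c]
  by (simp add: window_event_def noise_weight_def)

lemma measure_S_T_path:
  "measure coupled_space {z\<in>space coupled_space. S n z = a \<and> (\<forall>i\<le>n. T i z = b i)}
    = m (b 0) * (\<Prod>i<n. Ptr (b i) (b (Suc i))) * cmu a (b n)"
  using measure_observed_window[of 0 n a b 0]
  by (simp add: atLeast0AtMost atLeast0LessThan Ball_def path_weight_def future_weight_def)

lemma measure_T_path:
  "measure coupled_space {z\<in>space coupled_space. \<forall>i\<le>n. T i z = b i}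
    = m (b 0) * (\<Prod>i<n. Ptr (b i) (b (Suc i)))"
proof -
  have "measure coupled_space {z\<in>space coupled_space. \<forall>i\<le>n. T i z = b i}
      = (\<Sum>a\<in>UNIV. m (b 0) * (\<Prod>i<n. Ptr (b i) (b (Suc i))) * cmu a (b n))"
  proof (subst C.measure_eq_sum_fibres[of "S n"], measurable, intro sum.cong refl)
    fix a
    have "{z\<in>{z\<in>space coupled_space. \<forall>i\<le>n. T i z = b i}. S n z = a}
        = {z\<in>space coupled_space. S n z = a \<and> (\<forall>i\<le>n. T i z = b i)}"
      by blast
    then show "measure coupled_space {z\<in>{z\<in>space coupled_space. \<forall>i\<le>n. T i z = b i}. S n z = a}
        = m (b 0) * (\<Prod>i<n. Ptr (b i) (b (Suc i))) * cmu a (b n)"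
      by (simp only: measure_S_T_path)
  qed
  then show ?thesis by (simp add: sum_distrib_left[symmetric] cmu_sum)
qed

lemma measure_S_path:
  "measure coupled_space {z\<in>space coupled_space. \<forall>i\<le>n. S i z = b i}
    = m (b 0) * (\<Prod>i<n. Ptr (b i) (b (Suc i)))"
proof -
  define A where "A = {\<omega>\<in>space M0. \<forall>i\<le>n. s i \<omega> = b i}"
  have A: "A \<in> sets M0" unfolding A_def by measurable
  have "{z\<in>space coupled_space. \<forall>i\<le>n. S i z = b i} = A \<times> space noise"
    by (auto simp: space_coupled_space space_noise A_def)
  then have "measure coupled_space {z\<in>space coupled_space. \<forall>i\<le>n. S i z = b i} = measure M0 A"
    by (simp only: measure_coupled_space_Times[OF A sets.top] noise.prob_space mult_1_right)
  then show ?thesis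
    using markov by (simp add: A_def markov_chain_law_def)
qed

lemma measure_S_T: "measure coupled_space {z\<in>space coupled_space. S n z = a \<and> T n z = b} = mu a b"
  using measure_observed_window[of n n a "\<lambda>_. b" 0]
  by (simp add: path_weight_def future_weight_def m_times_cmu)

lemma measure_S_future:
  "measure coupled_space {z\<in>space coupled_space. S n z = a \<and> (\<forall>j<k. S (Suc n + j) z = c j)}
    = m a * future_weight a c k"
proof -
  let ?F = "{z\<in>space coupled_space. S n z = a \<and> (\<forall>j<k. S (Suc n + j) z = c j)}"
  have "measure coupled_space ?F = (\<Sum>y\<in>UNIV. measure coupled_space {z\<in>space coupled_space.
      S n z = a \<and> (\<forall>i\<in>{n..n}. T i z = (\<lambda>_. y) i) \<and> (\<forall>j<k. S (Suc n + j) z = c j)})"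
  proof (subst C.measure_eq_sum_fibres[of "T n"], measurable, intro sum.cong refl)
    fix y
    have "{z\<in>?F. T n z = y} = {z\<in>space coupled_space.
        S n z = a \<and> (\<forall>i\<in>{n..n}. T i z = (\<lambda>_. y) i) \<and> (\<forall>j<k. S (Suc n + j) z = c j)}"
      by auto
    then show "measure coupled_space {z\<in>?F. T n z = y} = measure coupled_space {z\<in>space coupled_space.
        S n z = a \<and> (\<forall>i\<in>{n..n}. T i z = (\<lambda>_. y) i) \<and> (\<forall>j<k. S (Suc n + j) z = c j)}"
      by (simp only:)
  qed
  also have "\<dots> = (\<Sum>y\<in>UNIV. mu a y) * future_weight a c k"
    by (simp only: measure_observed_window[OF order_refl])
       (simp add: path_weight_def m_times_cmu sum_distrib_right)
  finally show ?thesis by (simp add: mu_row_sum)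
qed

lemma distr_T_eq_distr_S:
  "distr coupled_space (PiM UNIV (\<lambda>_. count_space UNIV)) (\<lambda>z n. T n z)
    = distr coupled_space (PiM UNIV (\<lambda>_. count_space UNIV)) (\<lambda>z n. S n z)"
  by (rule distr_process_eqI_paths) (simp_all add: measure_T_path measure_S_path C.finite_measure_axioms)

lemma cond_law_T: "cond_law_prop coupled_space S T mu m"
  unfolding cond_law_prop_def measure_S_T_path measure_T_path by simp

lemma cond_indep_T: "cond_indep_prop coupled_space S T"
  unfolding cond_indep_prop_def
proof (intro allI)
  fix n k a and b c :: "nat \<Rightarrow> 's"
  have past_future: "measure coupled_space {z\<in>space coupled_space. S n z = a \<and> (\<forall>i\<le>n. T i z = b i)
      \<and> (\<forall>j<k. S (Suc n + j) z = c j)} = path_weight 0 n a b * future_weight a c k"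
    using measure_observed_window[of 0 n a b k c] by (simp add: atLeast0AtMost Ball_def)
  have past: "measure coupled_space {z\<in>space coupled_space. S n z = a \<and> (\<forall>i\<le>n. T i z = b i)}
      = path_weight 0 n a b"
    by (simp add: measure_S_T_path path_weight_def atLeast0LessThan)
  have present: "measure coupled_space {z\<in>space coupled_space. S n z = a} = m a"
    using measure_S_future[of n a 0] by (simp add: future_weight_def)
  show "measure coupled_space {z\<in>space coupled_space. S n z = a \<and> (\<forall>i\<le>n. T i z = b i)
        \<and> (\<forall>j<k. S (Suc n + j) z = c j)} * measure coupled_space {z\<in>space coupled_space. S n z = a}
    = measure coupled_space {z\<in>space coupled_space. S n z = a \<and> (\<forall>i\<le>n. T i z = b i)}
      * measure coupled_space {z\<in>space coupled_space. S n z = a \<and> (\<forall>j<k. S (Suc n + j) z = c j)}"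
    unfolding past_future past present measure_S_future by (simp only: mult_ac)
qed

end

theorem lemma7:
  fixes Ptr :: "'s::finite \<Rightarrow> 's \<Rightarrow> real" and m :: "'s \<Rightarrow> real"
    and mu :: "'s \<Rightarrow> 's \<Rightarrow> real"
    and M0 :: "'w measure" and s :: "nat \<Rightarrow> 'w \<Rightarrow> 's"
  assumes "stochastic Ptr" and "irreducible_chain Ptr" and "aperiodic_chain Ptr"
    and "invariant_distr Ptr m" and "\<forall>x. m x > 0"
    and "prob_space M0"
    and "\<forall>n. s n \<in> measurable M0 (count_space UNIV)"
    and "markov_chain_law M0 s Ptr m"
    and "mu \<in> couplings' Ptr m"
  shows "\<exists>(M :: ('w \<times> (nat \<Rightarrow> 's)) measure) (t :: nat \<Rightarrow> ('w \<times> (nat \<Rightarrow> 's)) \<Rightarrow> 's).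
           prob_space M
         \<and> fst \<in> measurable M M0 \<and> distr M M0 fst = M0
         \<and> (\<forall>n. t n \<in> measurable M (count_space UNIV))
         \<and> distr M (Pi\<^sub>M UNIV (\<lambda>_. count_space UNIV)) (\<lambda>\<omega> n. t n \<omega>)
             = distr M (Pi\<^sub>M UNIV (\<lambda>_. count_space UNIV)) (\<lambda>\<omega> n. s n (fst \<omega>))
         \<and> (\<forall>n a b. measure M {\<omega>\<in>space M. s n (fst \<omega>) = a \<and> t n \<omega> = b} = mu a b)
         \<and> cond_law_prop M (\<lambda>n \<omega>. s n (fst \<omega>)) t mu m
         \<and> cond_indep_prop M (\<lambda>n \<omega>. s n (fst \<omega>)) t"
proof -
  interpret coupling_construction M0 Ptr m mu s
    using assms by (intro coupling_construction.intro coupling_construction_axioms.intro) auto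
  have "fst \<in> coupled_space \<rightarrow>\<^sub>M M0"
    unfolding coupled_space_def by (rule measurable_fst)
  moreover have "distr coupled_space M0 fst = M0"
    unfolding coupled_space_def by (rule noise.distr_pair_fst)
  ultimately show ?thesis
    by (intro exI[of _ coupled_space] exI[of _ T] conjI allI C.prob_space_axioms measurable_T
        distr_T_eq_distr_S measure_S_T cond_law_T cond_indep_T)
qed

end
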